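(* Let $\mathcal{A}=\{A_1,\dots,A_l\}$ be a finite family of real $n\times n$ matrices, each having a strictly dominant eigenvalue $\lambda_i$. For each $i$ let $\hat r_i$ and $\hat h_i$ be arbitrary nonzero right and left eigenvectors of $A_i$ for $\lambda_i$ (so $A_i\hat r_i=\lambda_i\hat r_i$, $\hat h_i^TA_i=\lambda_i\hat h_i^T$). Construct vectors $\tilde h_1,\dots,\tilde h_l$ and $\tilde r_1,\dots,\tilde r_l$ as follows: $\tilde h_1:=\hat h_1$; for each $k$, $\tilde r_k\in\{\hat r_k,-\hat r_k\}$ is chosen such that $\langle\tilde h_1,\tilde r_k\rangle\ge0$; for each $j>1$, $\tilde h_j\in\{\hat h_j,-\hat h_j\}$ is chosen such that $\langle\tilde h_j,\tilde r_j\rangle\ge0$ (any admissible choice when there is ambiguity). Let $\tilde R\in\mathbb{R}^{n\times l}$ have columns $\tilde r_k$ and $\tilde H\in\mathbb{R}^{l\times n}$ have rows $\tilde h_j^T$, and set $\mathcal{K}_{inner}(\mathcal{A}):=\{\tilde Rp:p\ge0\}$, $\mathcal{K}_{outer}(\mathcal{A}):=\{r:\tilde Hr\ge0\}$. Suppose there exists $R\in\mathbb{R}^{n\times m}$ such that $\{Rp:p\ge0\}$ is a proper cone and for each $i$ there exist $\alpha_i\in\mathbb{R}$ and $P_i\in\mathbb{R}^{m\times m}$ with all entries strictly positive such that $(\alpha_iI+A_i)R=RP_i$. Then $\langle\tilde h_j,\tilde r_k\rangle>0$ for all $j,k$, i.e. $\tilde H\tilde R>0$ entrywise; equivalently, every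 $r\in\mathcal{K}_{inner}(\mathcal{A})\setminus\{0\}$ lies in $\operatorname{int}(\mathcal{K}_{outer}(\mathcal{A}))$.
   Context: Inequalities between vectors/matrices are entrywise. A proper cone is a set $\mathcal{K}\subseteq\mathbb{R}^n$ closed under nonnegative linear combinations, with nonempty interior, and such that $r\in\mathcal{K}\setminus\{0\}$ implies $-r\notin\mathcal{K}$. A real square matrix $A$ has a strictly dominant eigenvalue if it has a real, algebraically simple eigenvalue $\lambda$ with $\operatorname{Re}\mu<\lambda$ for every other eigenvalue $\mu$. *)

theory Defs
  imports "HOL-Analysis.Analysis" "HOL-Computational_Algebra.Polynomial"
begin

definition charpoly :: "real^'n^'n \<Rightarrow> complex poly" where
  "charpoly A = det (\<chi> i j. (if i = j then [:0, 1:] else 0) - [:complex_of_real (A $ i $ j):])"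

definition strictly_dominant_eig :: "real^'n^'n \<Rightarrow> real \<Rightarrow> bool" where
  "strictly_dominant_eig A lam \<longleftrightarrow>
     poly (charpoly A) (complex_of_real lam) = 0 \<and>
     order (complex_of_real lam) (charpoly A) = 1 \<and>
     (\<forall>\<mu>. poly (charpoly A) \<mu> = 0 \<and> \<mu> \<noteq> complex_of_real lam \<longrightarrow> Re \<mu> < lam)"

definition proper_cone :: "('a::real_normed_vector) set \<Rightarrow> bool" where
  "proper_cone K \<longleftrightarrow>
     (\<forall>x\<in>K. \<forall>y\<in>K. \<forall>a b::real. a \<ge> 0 \<and> b \<ge> 0 \<longrightarrow> a *\<^sub>R x + b *\<^sub>R y \<in> K) \<and>
     interior K \<noteq> {} \<and>
     (\<forall>r\<in>K. r \<noteq> 0 \<longrightarrow> - r \<notin> K)"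

end

theory Submission
  imports Defs
begin

(* Perron's theorem gives the positive matrix P_i a positive eigenvector x_i with eigenvalue
   rho_i. The intertwining relation (alpha_i I + A_i) R = R P_i makes R x_i an eigenvector of A_i
   for rho_i - alpha_i, and h R a left eigenvector of P_i for alpha_i + lambda_i whenever h is a
   left eigenvector of A_i. Since the cone has interior, h R is nonzero, so
   |alpha_i + lambda_i| <= rho_i, and strict dominance of lambda_i forces
   rho_i = alpha_i + lambda_i. The equality case of this estimate makes h R strictly positive or
   strictly negative; hence the left, and therefore the right, lambda_i-eigenspace is a line, and
   r_k is a multiple of R x_k. Consequently the sign of <h_j, r_k> is a product a_j b_k of
   nonzero signs, and the normalisation <h_1, r_k> >= 0, <h_j, r_j> >= 0 forces all these
   products to be positive. *)

lemma poly_charpoly_of_real: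
  fixes A :: "real^'n^'n"
  shows "poly (charpoly A) (complex_of_real \<mu>) = complex_of_real (det (\<mu> *\<^sub>R mat 1 - A))"
  unfolding charpoly_def det_def
  by (auto simp: poly_sum poly_prod of_real_sum of_real_prod mat_def intro!: sum.cong prod.cong)

lemma charpoly_root_of_eigenvector:
  fixes A :: "real^'n^'n"
  assumes "v \<noteq> 0" "A *v v = \<mu> *\<^sub>R v"
  shows "poly (charpoly A) (complex_of_real \<mu>) = 0"
proof -
  have "(\<mu> *\<^sub>R mat 1 - A) *v v = 0"
    using assms by (simp add: matrix_vector_mult_diff_rdistrib scaleR_matrix_vector_assoc[symmetric])
  then have "\<not> invertible (\<mu> *\<^sub>R mat 1 - A)"
    using assms(1) matrix_left_invertible_ker unfolding invertible_def by blast
  then have "det (\<mu> *\<^sub>R mat 1 - A) = 0"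
    using invertible_det_nz by blast
  then show ?thesis by (simp add: poly_charpoly_of_real)
qed

definition stochastic_vectors :: "(real^'m) set" where
  "stochastic_vectors = {x. (\<forall>a. 0 \<le> x $ a) \<and> (\<Sum>a\<in>UNIV. x $ a) = 1}"

lemma compact_stochastic_vectors: "compact stochastic_vectors"
proof (rule compact_eq_bounded_closed[THEN iffD2], rule conjI)
  have "norm x \<le> 1" if "x \<in> stochastic_vectors" for x :: "real^'m"
    using norm_le_l1_cart[of x] that by (simp add: stochastic_vectors_def)
  then show "bounded (stochastic_vectors :: (real^'m) set)"
    unfolding bounded_iff by blast
  have "stochastic_vectors = (\<Inter>a. {x::real^'m. 0 \<le> x $ a}) \<inter> {x. (\<Sum>a\<in>UNIV. x $ a) = 1}"
    by (auto simp: stochastic_vectors_def)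
  also have "closed \<dots>"
    by (intro closed_Int closed_INT ballI closed_Collect_le closed_Collect_eq continuous_intros)
  finally show "closed (stochastic_vectors :: (real^'m) set)" .
qed

lemma convex_stochastic_vectors: "convex stochastic_vectors"
  unfolding convex_def stochastic_vectors_def
  by (auto simp: sum.distrib sum_distrib_left[symmetric])

lemma stochastic_vectors_nonempty: "stochastic_vectors \<noteq> {}"
proof -
  have "(\<chi> a. 1 / real CARD('m)) \<in> (stochastic_vectors :: (real^'m) set)"
    by (simp add: stochastic_vectors_def)
  then show ?thesis by blast
qed

lemma positive_matrix_vector_mult_pos:
  fixes P :: "real^'m^'m"
  assumes P: "\<And>a b. P $ a $ b > 0" and x: "\<And>a. x $ a \<ge> 0" "x \<noteq> 0"
  shows "(P *v x) $ b > 0"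
proof -
  obtain a where "x $ a \<noteq> 0" using x(2) by (metis vec_eq_iff zero_index)
  then have "0 < P $ b $ a * x $ a" using P x(1)[of a] by simp
  then show ?thesis unfolding matrix_vector_mult_def
    by (auto intro!: sum_pos2[of UNIV a] simp: x(1) P less_imp_le)
qed

text \<open>Perron's theorem, via Brouwer's fixed point theorem for the normalised map
  \<open>x \<mapsto> P x / \<Sum>(P x)\<close> on the stochastic vectors.\<close>
lemma perron_positive_eigenvector:
  fixes P :: "real^'m^'m"
  assumes P: "\<And>a b. P $ a $ b > 0"
  obtains x \<rho> where "\<And>a. x $ a > 0" "P *v x = \<rho> *\<^sub>R x"
proof -
  let ?S = "stochastic_vectors :: (real^'m) set"
  define s where "s x = (\<Sum>a\<in>UNIV. (P *v x) $ a)" for x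
  define f where "f x = (1 / s x) *\<^sub>R (P *v x)" for x
  have Px_pos: "(P *v x) $ a > 0" if "x \<in> ?S" for x a
    using that positive_matrix_vector_mult_pos[OF P] by (force simp: stochastic_vectors_def)
  then have s_pos: "s x > 0" if "x \<in> ?S" for x
    using that by (simp add: s_def sum_pos)
  have "continuous_on ?S f"
    unfolding f_def s_def by (intro continuous_intros) (auto dest!: s_pos simp: s_def)
  moreover have "f x \<in> ?S" if "x \<in> ?S" for x
    using s_pos[OF that] Px_pos[OF that]
    by (simp add: f_def stochastic_vectors_def less_imp_le sum_divide_distrib[symmetric] s_def)
  ultimately obtain x where x: "x \<in> ?S" "f x = x"
    using brouwer[OF compact_stochastic_vectors convex_stochastic_vectors
        stochastic_vectors_nonempty] by blast
  have "P *v x = s x *\<^sub>R f x"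
    using s_pos[OF x(1)] by (simp add: f_def)
  then have "P *v x = s x *\<^sub>R x" using x(2) by simp
  moreover have "x $ a > 0" for a
  proof -
    have "x $ a = (P *v x) $ a / s x" using x(2) by (simp add: f_def vec_eq_iff)
    then show ?thesis using Px_pos[OF x(1)] s_pos[OF x(1)] by simp
  qed
  ultimately show ?thesis using that by blast
qed

definition strictly_signed :: "real^'m \<Rightarrow> bool" where
  "strictly_signed y \<longleftrightarrow> (\<forall>a. y $ a > 0) \<or> (\<forall>a. y $ a < 0)"

lemma abs_sum_eq_sum_abs_imp_same_sign:
  fixes c :: "'a \<Rightarrow> real"
  assumes "finite A" "\<bar>sum c A\<bar> = (\<Sum>a\<in>A. \<bar>c a\<bar>)"
  shows "(\<forall>a\<in>A. c a \<ge> 0) \<or> (\<forall>a\<in>A. c a \<le> 0)"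
proof (cases "sum c A \<ge> 0")
  case True
  then have "(\<Sum>a\<in>A. \<bar>c a\<bar> - c a) = 0" using assms(2) by (simp add: sum_subtractf)
  then have "\<forall>a\<in>A. \<bar>c a\<bar> - c a = 0" using assms(1) by (subst (asm) sum_nonneg_eq_0_iff) auto
  then show ?thesis by auto
next
  case False
  then have "(\<Sum>a\<in>A. \<bar>c a\<bar> + c a) = 0" using assms(2) by (simp add: sum.distrib)
  then have "\<forall>a\<in>A. \<bar>c a\<bar> + c a = 0" using assms(1) by (subst (asm) sum_nonneg_eq_0_iff) auto
  then show ?thesis by auto
qed

text \<open>Pairing the entrywise absolute value \<open>z\<close> of \<open>y\<close> with the Perron vector \<open>x\<close> turns
  the triangle inequality \<open>\<bar>\<beta>\<bar> z \<le> z P\<close> into \<open>\<bar>\<beta>\<bar> \<le> \<rho>\<close>; for \<open>\<beta> = \<rho>\<close> it is an equality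
  in every column, which forces all entries of \<open>y\<close> to have one strict sign.\<close>
lemma positive_matrix_left_eigenvector:
  fixes P :: "real^'m^'m" and x y :: "real^'m"
  assumes P: "\<And>a b. P $ a $ b > 0" and x: "\<And>a. x $ a > 0" and Px: "P *v x = \<rho> *\<^sub>R x"
    and y: "y \<noteq> 0" "y v* P = \<beta> *\<^sub>R y"
  shows "\<bar>\<beta>\<bar> \<le> \<rho>" and "\<beta> = \<rho> \<Longrightarrow> strictly_signed y"
proof -
  define z where "z = (\<chi> a. \<bar>y $ a\<bar>)"
  have z_nonneg: "z $ a \<ge> 0" for a by (simp add: z_def)
  have "z \<noteq> 0" using y(1) by (auto simp: z_def vec_eq_iff)
  have column: "\<beta> * y $ b = (\<Sum>a\<in>UNIV. P $ a $ b * y $ a)" for b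
    using y(2) by (simp add: vec_eq_iff vector_matrix_mult_def mult.commute)
  have zP: "(z v* P) $ b = (\<Sum>a\<in>UNIV. \<bar>P $ a $ b * y $ a\<bar>)" for b
    using P by (simp add: z_def vector_matrix_mult_def abs_mult less_imp_le mult.commute)
  have triangle: "\<bar>\<beta>\<bar> * z $ b \<le> (z v* P) $ b" for b
    unfolding zP using sum_abs[of "\<lambda>a. P $ a $ b * y $ a" UNIV]
    by (simp add: z_def column[symmetric] abs_mult)
  have zx: "inner z x > 0"
  proof -
    obtain a where "z $ a \<noteq> 0" using \<open>z \<noteq> 0\<close> by (metis vec_eq_iff zero_index)
    then show ?thesis unfolding inner_vec_def using z_nonneg x
      by (intro sum_pos2[of UNIV a]) (auto simp: less_le)
  qed
  have zPx: "inner (z v* P) x = \<rho> * inner z x"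
    by (simp add: dot_lmul_matrix Px)
  have "\<bar>\<beta>\<bar> * inner z x \<le> inner (z v* P) x"
    unfolding inner_vec_def sum_distrib_left using triangle x
    by (intro sum_mono) (simp add: mult.assoc[symmetric] mult_right_mono less_imp_le)
  then show bound: "\<bar>\<beta>\<bar> \<le> \<rho>" using zPx zx by simp
  assume "\<beta> = \<rho>"
  then have "(\<Sum>b\<in>UNIV. ((z v* P) $ b - \<bar>\<beta>\<bar> * z $ b) * x $ b) = 0"
    using zPx bound by (simp add: inner_vec_def algebra_simps sum_subtractf sum_distrib_left)
  then have "\<forall>b\<in>UNIV. ((z v* P) $ b - \<bar>\<beta>\<bar> * z $ b) * x $ b = 0"
    using triangle x by (subst (asm) sum_nonneg_eq_0_iff) (auto simp: less_imp_le)
  then have equality: "(z v* P) $ b = \<bar>\<beta>\<bar> * z $ b" for b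
    using x[of b] by auto
  have "(\<forall>a. y $ a \<ge> 0) \<or> (\<forall>a. y $ a \<le> 0)"
  proof -
    fix b
    have "\<bar>\<Sum>a\<in>UNIV. P $ a $ b * y $ a\<bar> = (\<Sum>a\<in>UNIV. \<bar>P $ a $ b * y $ a\<bar>)"
      using equality[of b] unfolding zP by (simp add: z_def column[symmetric] abs_mult)
    then have "(\<forall>a. P $ a $ b * y $ a \<ge> 0) \<or> (\<forall>a. P $ a $ b * y $ a \<le> 0)"
      using abs_sum_eq_sum_abs_imp_same_sign[of UNIV "\<lambda>a. P $ a $ b * y $ a"] by simp
    then show ?thesis using P by (metis zero_le_mult_iff mult_le_0_iff not_less)
  qed
  moreover have "y $ b \<noteq> 0" for b
  proof -
    have "(transpose P *v z) $ b > 0"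
      by (rule positive_matrix_vector_mult_pos) (simp_all add: transpose_def P z_nonneg \<open>z \<noteq> 0\<close>)
    then show ?thesis using equality[of b] by (auto simp: z_def)
  qed
  ultimately show "strictly_signed y"
    unfolding strictly_signed_def by (metis less_eq_real_def)
qed

lemma strictly_signed_inner_mult_pos:
  fixes y x x' :: "real^'m"
  assumes "strictly_signed y" "\<And>a. x $ a > 0" "\<And>a. x' $ a > 0"
  shows "inner y x * inner y x' > 0"
  using assms(1) unfolding strictly_signed_def
proof
  assume "\<forall>a. y $ a > 0"
  then have "inner y x > 0" "inner y x' > 0"
    using assms(2,3) unfolding inner_vec_def by (auto intro!: sum_pos)
  then show ?thesis by simp
next
  assume "\<forall>a. y $ a < 0"
  then have "inner (- y) x > 0" "inner (- y) x' > 0"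
    using assms(2,3) unfolding inner_vec_def by (auto intro!: sum_pos simp: mult_neg_pos)
  then show ?thesis by (simp add: mult_neg_neg)
qed

lemma proper_cone_image_left_injective:
  fixes R :: "real^'m^'n"
  assumes "proper_cone {R *v p | p. \<forall>a. p $ a \<ge> 0}" and "h v* R = 0"
  shows "h = 0"
proof (rule ccontr)
  assume "h \<noteq> 0"
  have "{R *v p | p. \<forall>a. p $ a \<ge> 0} \<subseteq> {v. h \<bullet> v = 0}"
    using assms(2) by (auto simp: dot_lmul_matrix[symmetric])
  then have "interior {R *v p | p. \<forall>a. p $ a \<ge> 0} = {}"
    using interior_mono interior_hyperplane[OF \<open>h \<noteq> 0\<close>] by blast
  with assms(1) show False unfolding proper_cone_def by blast
qed

lemma proper_cone_image_positive_nonzero: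
  fixes R :: "real^'m^'n" and x :: "real^'m"
  assumes cone: "proper_cone {R *v p | p. \<forall>a. p $ a \<ge> 0}" and x: "\<And>a. x $ a > 0"
  shows "R *v x \<noteq> 0"
proof
  assume Rx: "R *v x = 0"
  let ?K = "{R *v p | p. \<forall>a. p $ a \<ge> 0}"
  have "?K \<noteq> {0}" using cone unfolding proper_cone_def by (metis interior_singleton)
  moreover have "0 \<in> ?K" by (auto intro!: exI[of _ 0])
  ultimately obtain p where p: "\<forall>a. p $ a \<ge> 0" "R *v p \<noteq> 0" by blast
  text \<open>Since \<open>x\<close> is strictly positive, \<open>t x - p \<ge> 0\<close> for large \<open>t\<close>, and it is mapped to \<open>-R p\<close>.\<close>
  define t where "t = (\<Sum>a\<in>UNIV. p $ a / x $ a)"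
  have ratio: "p $ a / x $ a \<le> t" for a
    unfolding t_def by (rule member_le_sum) (auto simp: p x less_imp_le)
  have "\<forall>a. (t *\<^sub>R x - p) $ a \<ge> 0"
    using ratio x by (simp add: pos_divide_le_eq)
  moreover have "- (R *v p) = R *v (t *\<^sub>R x - p)"
    by (simp add: algebra_simps matrix_vector_mult_diff_distrib matrix_vector_mult_scaleR Rx)
  ultimately have "- (R *v p) \<in> ?K" by blast
  moreover have "R *v p \<in> ?K" using p by blast
  ultimately show False using cone p(2) unfolding proper_cone_def by blast
qed

lemma dim_null_space_add_rank:
  fixes M :: "real^'n^'m"
  shows "dim {x. M *v x = 0} + rank M = dim (UNIV :: (real^'n) set)"
proof -
  have "{x. M *v x = 0} = {y \<in> UNIV. \<forall>v \<in> range ((*v) (transpose M)). orthogonal v y}"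
  proof -
    have "(\<forall>z. orthogonal (z v* M) y) \<longleftrightarrow> M *v y = 0" for y
    proof
      assume "\<forall>z. orthogonal (z v* M) y"
      then have "inner (M *v y) (M *v y) = 0"
        by (metis dot_lmul_matrix orthogonal_def)
      then show "M *v y = 0" by simp
    qed (simp add: orthogonal_def dot_lmul_matrix)
    then show ?thesis by auto
  qed
  moreover have "rank M = dim (range ((*v) (transpose M)))"
    using rank_dim_range[of "transpose M"] by (simp add: rank_transpose)
  moreover have "subspace (range ((*v) (transpose M)))"
    using linear_subspace_image[OF matrix_vector_mul_linear subspace_UNIV] by blast
  ultimately show ?thesis
    using dim_subspace_orthogonal_to_vectors[of "range ((*v) (transpose M))" UNIV] by simp
qed

lemma dim_left_null_space:
  fixes M :: "real^'n^'n"
  shows "dim {h. h v* M = 0} = dim {x. M *v x = 0}"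
  using dim_null_space_add_rank[of M] dim_null_space_add_rank[of "transpose M"]
  by (simp add: rank_transpose)

lemma dim_le_1_if_functional_nonzero:
  fixes f :: "'a::euclidean_space \<Rightarrow> real"
  assumes "subspace S" "linear f" "\<And>v. v \<in> S \<Longrightarrow> f v = 0 \<Longrightarrow> v = 0"
  shows "dim S \<le> 1"
proof -
  have "inj_on f S"
    using linear_inj_on_iff_eq_0[OF assms(2,1)] assms(3) by blast
  then have "inj_on f (span S)"
    using assms(1) by (simp add: span_eq_iff[THEN iffD2])
  then have "dim (f ` S) = dim S"
    using dim_image_eq[OF assms(2)] by blast
  moreover have "dim (f ` S) \<le> 1"
    using dim_subset_UNIV[of "f ` S"] by simp
  ultimately show ?thesis by simp
qed

lemma subspace_dim_le_1_multiple:
  fixes S :: "'a::euclidean_space set"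
  assumes "subspace S" "dim S \<le> 1" "u \<in> S" "u \<noteq> 0" "r \<in> S"
  shows "\<exists>c. r = c *\<^sub>R u"
proof (rule ccontr)
  assume "\<nexists>c. r = c *\<^sub>R u"
  then have "r \<notin> span {u}" by (auto simp: span_singleton)
  then have "independent {r, u}"
    using assms(4) by (simp add: independent_insert)
  then have "card {r, u} \<le> dim S"
    using assms by (intro independent_card_le_dim) auto
  moreover have "r \<noteq> u" using \<open>r \<notin> span {u}\<close> by (metis span_base insertI1)
  ultimately show False using assms(2) by simp
qed

lemma intertwining_right_eigenvector:
  fixes A :: "real^'n^'n" and R :: "real^'m^'n" and P :: "real^'m^'m"
  assumes "(\<alpha> *\<^sub>R mat 1 + A) ** R = R ** P" "P *v x = \<rho> *\<^sub>R x"
  shows "A *v (R *v x) = (\<rho> - \<alpha>) *\<^sub>R (R *v x)"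
proof -
  have "\<alpha> *\<^sub>R (R *v x) + A *v (R *v x) = (\<alpha> *\<^sub>R mat 1 + A) *v (R *v x)"
    by (simp add: matrix_vector_mult_add_rdistrib scaleR_matrix_vector_assoc[symmetric])
  also have "\<dots> = R *v (P *v x)"
    by (simp add: matrix_vector_mul_assoc assms(1))
  also have "\<dots> = \<rho> *\<^sub>R (R *v x)"
    by (simp add: assms(2) matrix_vector_mult_scaleR)
  finally show ?thesis by (simp add: algebra_simps)
qed

lemma intertwining_left_eigenvector:
  fixes A :: "real^'n^'n" and R :: "real^'m^'n" and P :: "real^'m^'m"
  assumes "(\<alpha> *\<^sub>R mat 1 + A) ** R = R ** P" "h v* A = lam *\<^sub>R h"
  shows "(h v* R) v* P = (\<alpha> + lam) *\<^sub>R (h v* R)"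
proof -
  have "h v* (\<alpha> *\<^sub>R mat 1 + A) = (\<alpha> + lam) *\<^sub>R h"
    using assms(2) by (simp add: vector_matrix_mult_add_rdistrib vector_scaleR_matrix_ac scaleR_add_left)
  then have "h v* ((\<alpha> *\<^sub>R mat 1 + A) ** R) = (\<alpha> + lam) *\<^sub>R (h v* R)"
    by (simp add: vector_matrix_mul_assoc[symmetric] scaleR_vector_matrix_assoc)
  then show ?thesis by (simp add: vector_matrix_mul_assoc assms(1))
qed

text \<open>The left eigenvector \<open>h R\<close> of \<open>P\<close> gives \<open>\<bar>\<alpha> + lam\<bar> \<le> \<rho>\<close> for the Perron root \<open>\<rho>\<close>,
  while \<open>\<rho> - \<alpha>\<close> is an eigenvalue of \<open>A\<close>; strict dominance leaves only \<open>\<rho> - \<alpha> = lam\<close>.\<close>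
lemma intertwining_perron_root_dominant:
  fixes A :: "real^'n^'n" and R :: "real^'m^'n" and P :: "real^'m^'m"
  assumes dom: "strictly_dominant_eig A lam"
    and h: "h \<noteq> 0" "h v* A = lam *\<^sub>R h"
    and inter: "(\<alpha> *\<^sub>R mat 1 + A) ** R = R ** P"
    and P: "\<And>a b. P $ a $ b > 0"
    and cone: "proper_cone {R *v p | p. \<forall>a. p $ a \<ge> 0}"
  obtains x where "\<And>a. x $ a > 0" "P *v x = (\<alpha> + lam) *\<^sub>R x" "A *v (R *v x) = lam *\<^sub>R (R *v x)"
proof -
  obtain x \<rho> where x: "\<And>a. x $ a > 0" and Px: "P *v x = \<rho> *\<^sub>R x"
    using perron_positive_eigenvector[OF P] by blast
  have Ax: "A *v (R *v x) = (\<rho> - \<alpha>) *\<^sub>R (R *v x)"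
    using intertwining_right_eigenvector[OF inter Px] .
  then have root: "poly (charpoly A) (complex_of_real (\<rho> - \<alpha>)) = 0"
    using charpoly_root_of_eigenvector proper_cone_image_positive_nonzero[OF cone x] by blast
  have "h v* R \<noteq> 0"
    using proper_cone_image_left_injective[OF cone] h(1) by blast
  then have "lam \<le> \<rho> - \<alpha>"
    using positive_matrix_left_eigenvector(1)[OF P x Px _ intertwining_left_eigenvector[OF inter h(2)]]
    by simp
  then have "\<rho> - \<alpha> = lam"
    using dom root unfolding strictly_dominant_eig_def by (metis Re_complex_of_real not_less of_real_eq_iff)
  then show ?thesis
    using Px Ax by (intro that[OF x]) auto
qed

lemma eigenvector_unique_if_left_eigenvectors_signed:
  fixes A :: "real^'n^'n" and R :: "real^'m^'n"
  assumes signed: "\<And>h. h \<noteq> 0 \<Longrightarrow> h v* A = lam *\<^sub>R h \<Longrightarrow> strictly_signed (h v* R)"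
    and u: "u \<noteq> 0" "A *v u = lam *\<^sub>R u" and r: "A *v r = lam *\<^sub>R r"
  shows "\<exists>c. r = c *\<^sub>R u"
proof -
  define M where "M = A - lam *\<^sub>R mat 1"
  have left: "h v* M = 0 \<longleftrightarrow> h v* A = lam *\<^sub>R h" for h
    by (simp add: M_def vector_matrix_mult_diff_rdistrib vector_scaleR_matrix_ac)
  have right: "M *v v = 0 \<longleftrightarrow> A *v v = lam *\<^sub>R v" for v
    by (simp add: M_def matrix_vector_mult_diff_rdistrib scaleR_matrix_vector_assoc[symmetric])
  have "inner (h v* R) 1 \<noteq> 0" if "h \<noteq> 0" "h v* M = 0" for h
    using strictly_signed_inner_mult_pos[OF signed, of h 1 1] that left by auto
  moreover have "linear (\<lambda>h. inner (h v* R) 1)"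
    unfolding dot_lmul_matrix by (simp add: bounded_linear_inner_left bounded_linear.linear)
  moreover have "subspace {h. h v* M = 0}"
    using linear_subspace_kernel[OF matrix_vector_mul_linear[of "transpose M"]] by simp
  ultimately have "dim {h. h v* M = 0} \<le> 1"
    using dim_le_1_if_functional_nonzero[of _ "\<lambda>h. inner (h v* R) 1"] by blast
  then have "dim {v. M *v v = 0} \<le> 1"
    by (simp add: dim_left_null_space)
  moreover have "subspace {v. M *v v = 0}"
    using linear_subspace_kernel[OF matrix_vector_mul_linear[of M]] by simp
  ultimately show ?thesis
    using subspace_dim_le_1_multiple u r right by blast
qed

lemma intertwining_left_eigenvectors_signed:
  fixes A :: "real^'n^'n" and R :: "real^'m^'n" and P :: "real^'m^'m"
  assumes dom: "strictly_dominant_eig A lam"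
    and h: "h \<noteq> 0" "h v* A = lam *\<^sub>R h"
    and inter: "(\<alpha> *\<^sub>R mat 1 + A) ** R = R ** P"
    and P: "\<And>a b. P $ a $ b > 0"
    and cone: "proper_cone {R *v p | p. \<forall>a. p $ a \<ge> 0}"
    and h': "h' \<noteq> 0" "h' v* A = lam *\<^sub>R h'"
  shows "strictly_signed (h' v* R)"
proof -
  obtain x where x: "\<And>a. x $ a > 0" and Px: "P *v x = (\<alpha> + lam) *\<^sub>R x"
    using intertwining_perron_root_dominant[OF dom h inter P cone] by blast
  have "h' v* R \<noteq> 0"
    using proper_cone_image_left_injective[OF cone] h'(1) by blast
  then show ?thesis
    using positive_matrix_left_eigenvector(2)[OF P x Px _ intertwining_left_eigenvector[OF inter h'(2)]]
    by simp
qed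

lemma intertwining_eigenvectors_multiple:
  fixes A :: "real^'n^'n" and R :: "real^'m^'n" and P :: "real^'m^'m"
  assumes "strictly_dominant_eig A lam"
    and "h \<noteq> 0" "h v* A = lam *\<^sub>R h"
    and "(\<alpha> *\<^sub>R mat 1 + A) ** R = R ** P"
    and "\<And>a b. P $ a $ b > 0"
    and cone: "proper_cone {R *v p | p. \<forall>a. p $ a \<ge> 0}"
  obtains x where "\<And>a. x $ a > 0" "\<And>r. A *v r = lam *\<^sub>R r \<Longrightarrow> \<exists>c. r = c *\<^sub>R (R *v x)"
proof -
  obtain x where x: "\<And>a. x $ a > 0" and Ax: "A *v (R *v x) = lam *\<^sub>R (R *v x)"
    using intertwining_perron_root_dominant[OF assms] by blast
  then show ?thesis
    using that eigenvector_unique_if_left_eigenvectors_signed[OF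
        intertwining_left_eigenvectors_signed[OF assms] _ Ax]
      proper_cone_image_positive_nonzero[OF cone x] by blast
qed

text \<open>Writing \<open>r = c R x\<close> with \<open>x > 0\<close>, the sign of \<open>\<langle>g, r\<rangle>\<close> is the sign of \<open>c\<close> times
  the common sign of the entries of \<open>g R\<close>.\<close>
lemma intertwining_inner_sign_consistent:
  fixes A :: "real^'n^'n" and R :: "real^'m^'n" and P :: "real^'m^'m"
  assumes dom: "strictly_dominant_eig A lam"
    and h: "h \<noteq> 0" "h v* A = lam *\<^sub>R h"
    and inter: "(\<alpha> *\<^sub>R mat 1 + A) ** R = R ** P"
    and P: "\<And>a b. P $ a $ b > 0"
    and cone: "proper_cone {R *v p | p. \<forall>a. p $ a \<ge> 0}"
    and r: "r \<noteq> 0" "A *v r = lam *\<^sub>R r"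
    and g: "strictly_signed (g v* R)" and g': "strictly_signed (g' v* R)"
  shows "(inner g r * inner (g v* R) 1) * (inner g' r * inner (g' v* R) 1) > 0"
proof -
  obtain x where x: "\<And>a. x $ a > 0" and "\<exists>c. r = c *\<^sub>R (R *v x)"
    using intertwining_eigenvectors_multiple[OF dom h inter P cone] r(2) by metis
  then obtain c where c: "r = c *\<^sub>R (R *v x)" by blast
  with r(1) have "c \<noteq> 0" by auto
  have "(inner g r * inner (g v* R) 1) * (inner g' r * inner (g' v* R) 1)
      = c\<^sup>2 * ((inner (g v* R) x * inner (g v* R) 1) * (inner (g' v* R) x * inner (g' v* R) 1))"
    by (simp add: c dot_lmul_matrix power2_eq_square mult_ac)
  also have "\<dots> > 0"
    using \<open>c \<noteq> 0\<close> strictly_signed_inner_mult_pos[OF g x] strictly_signed_inner_mult_pos[OF g' x]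
    by simp
  finally show ?thesis .
qed

text \<open>If the signs of \<open>F\<close> form a rank-one pattern \<open>a j * b k\<close>, then nonnegativity of one row
  and of the diagonal forces strict positivity everywhere, because
  \<open>(a j * b k) * (a i\<^sub>0 * b j) = (a j * b j) * (a i\<^sub>0 * b k)\<close>.\<close>
lemma rank_one_sign_pattern_pos:
  fixes F :: "'i \<Rightarrow> 'i \<Rightarrow> real" and a b :: "'i \<Rightarrow> real"
  assumes sign: "\<And>j k. j \<in> I \<Longrightarrow> k \<in> I \<Longrightarrow> F j k * (a j * b k) > 0"
    and row: "i\<^sub>0 \<in> I" "\<And>k. k \<in> I \<Longrightarrow> F i\<^sub>0 k \<ge> 0"
    and diag: "\<And>j. j \<in> I \<Longrightarrow> F j j \<ge> 0"
    and jk: "j \<in> I" "k \<in> I"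
  shows "F j k > 0"
proof -
  have pos: "a j' * b k' > 0" if "j' \<in> I" "k' \<in> I" "F j' k' \<ge> 0" for j' k'
    using sign[OF that(1,2)] that(3) by (simp add: zero_less_mult_iff)
  have "(a j * b k) * (a i\<^sub>0 * b j) = (a j * b j) * (a i\<^sub>0 * b k)"
    by (simp add: mult_ac)
  then have "a j * b k > 0"
    using pos[OF jk(1) jk(1) diag] pos[OF row(1) jk(1) row(2)] pos[OF row(1) jk(2) row(2)] jk
    by (metis mult_pos_pos zero_less_mult_pos2)
  then show ?thesis
    using sign[OF jk] zero_less_mult_pos2 by blast
qed

theorem proposition7:
  fixes l :: nat
    and A :: "nat \<Rightarrow> real^'n^'n"
    and lam :: "nat \<Rightarrow> real"
    and rhat hhat rt ht :: "nat \<Rightarrow> real^'n"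
    and R :: "real^'m^'n"
    and alpha :: "nat \<Rightarrow> real"
    and P :: "nat \<Rightarrow> real^'m^'m"
  assumes dom: "\<And>i. i \<in> {1..l} \<Longrightarrow> strictly_dominant_eig (A i) (lam i)"
    and rhat: "\<And>i. i \<in> {1..l} \<Longrightarrow> rhat i \<noteq> 0 \<and> A i *v rhat i = lam i *\<^sub>R rhat i"
    and hhat: "\<And>i. i \<in> {1..l} \<Longrightarrow> hhat i \<noteq> 0 \<and> hhat i v* A i = lam i *\<^sub>R hhat i"
    and ht1: "ht 1 = hhat 1"
    and rt: "\<And>k. k \<in> {1..l} \<Longrightarrow> (rt k = rhat k \<or> rt k = - rhat k) \<and> inner (ht 1) (rt k) \<ge> 0"
    and ht: "\<And>j. j \<in> {2..l} \<Longrightarrow> (ht j = hhat j \<or> ht j = - hhat j) \<and> inner (ht j) (rt j) \<ge> 0"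
    and cone: "proper_cone {R *v p | p. \<forall>a. p $ a \<ge> 0}"
    and Ppos: "\<And>i a b. i \<in> {1..l} \<Longrightarrow> P i $ a $ b > 0"
    and inter: "\<And>i. i \<in> {1..l} \<Longrightarrow> (alpha i *\<^sub>R mat 1 + A i) ** R = R ** P i"
  shows "\<forall>j\<in>{1..l}. \<forall>k\<in>{1..l}. inner (ht j) (rt k) > 0"
proof -
  let ?I = "{1..l}"
  have left: "ht j \<noteq> 0" "ht j v* A j = lam j *\<^sub>R ht j" if "j \<in> ?I" for j
  proof -
    have "ht j = hhat j \<or> ht j = - hhat j"
      using ht[of j] ht1 that by (cases "j = 1") auto
    then show "ht j \<noteq> 0" "ht j v* A j = lam j *\<^sub>R ht j"
      using hhat[OF that] vector_matrix_mult_diff_distrib[of 0 "hhat j" "A j"] by auto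
  qed
  have right: "rt k \<noteq> 0" "A k *v rt k = lam k *\<^sub>R rt k" if "k \<in> ?I" for k
    using rhat[OF that] rt[OF that] matrix_vector_mult_diff_distrib[of "A k" 0 "rhat k"] by auto
  note data = dom hhat[THEN conjunct1] hhat[THEN conjunct2] inter Ppos
  have signed: "strictly_signed (ht j v* R)" if "j \<in> ?I" for j
    using intertwining_left_eigenvectors_signed[OF data[OF that] cone left[OF that]] .
  have sign: "inner (ht j) (rt k) * (inner (ht j v* R) 1 * (inner (ht 1) (rt k) * inner (ht 1 v* R) 1)) > 0"
    if "j \<in> ?I" "k \<in> ?I" for j k
  proof -
    have "1 \<in> ?I" using that by simp
    then show ?thesis
      using intertwining_inner_sign_consistent[OF data[OF that(2)] cone right[OF that(2)]
          signed[OF that(1)] signed[OF \<open>1 \<in> ?I\<close>]] by (simp add: mult_ac)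
  qed
  have row: "inner (ht 1) (rt k) \<ge> 0" if "k \<in> ?I" for k
    using rt[OF that] by blast
  have diag: "inner (ht j) (rt j) \<ge> 0" if "j \<in> ?I" for j
    using rt[OF that] ht[of j] that by (cases "j = 1") auto
  show ?thesis
  proof (intro ballI)
    fix j k assume jk: "j \<in> ?I" "k \<in> ?I"
    then have "1 \<in> ?I" by simp
    then show "inner (ht j) (rt k) > 0"
      using rank_one_sign_pattern_pos[where I = ?I and F = "\<lambda>j k. inner (ht j) (rt k)"
          and a = "\<lambda>j. inner (ht j v* R) 1" and b = "\<lambda>k. inner (ht 1) (rt k) * inner (ht 1 v* R) 1",
          OF sign _ row diag jk] by simp
  qed
qed

end
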